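(* Let $m\ge 2$ be an integer, and let $A\ge 1$, $B\ge 0$, $C\ge 1$ be integers such that $p(An+B)\equiv 0 \pmod{C}$ for all integers $n\ge 0$. If $B<A$ and $A\mid m$, then for every positive integer $k$ and every integer $n\ge 0$, $$o_{\rho,m}(An+B,k)\equiv 0 \pmod{C}.$$
   Context: $p(n)$ denotes the number of partitions of $n$. Part-frequency matrices: fix an integer modulus $m\ge 2$. Every positive integer $N$ can be written uniquely as $N=jm^k$ with $k\ge 0$ and $m\nmid j$. For a partition $\lambda$, write the number of times the part $N$ occurs in base $m$ as $\sum_{\ell\ge 0} a_{N,\ell}m^\ell$ with digits $a_{N,\ell}\in\{0,\dots,m-1\}$. For each $j\ge 1$ with $m\nmid j$, let $M_j$ be the infinite matrix, with rows and columns indexed from $0$, whose entry in row $k$, column $\ell$ is $a_{jm^k,\ell}$. The partition is recovered from the sequence $(M_j)$; an entry $a$ at position $(k,\ell)$ of $M_j$ contributes $a\cdot j\cdot m^{k+\ell}$ to the weight of the partition. The map $\rho$ (depending on $m$): apply to every matrix $M_j$ the following rotation of each antidiagonal. The entry at position $(k,\ell)$ with $\ell\ge 1$ moves to position $(k+1,\ell-1)$, and the entry at position $(k,0)$ moves to position $(0,k)$. The resulting sequence of matrices defines a new partition of the same integer, so $\rho$ is a permutation of the finite set of partitions of $n$. $o_{\rho,m}(n,k)$ denotes the number of orbits of size $k$ of $\rho$ (with modulus $m$) acting on the set of partitions of $n$. *)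

theory Defs
  imports Main
begin

text \<open>A partition of n is represented by its multiplicity function f:
  f N is the number of times the part N occurs (parts are positive, so f 0 = 0).\<close>
definition partitions :: "nat \<Rightarrow> (nat \<Rightarrow> nat) set" where
  "partitions n = {f. f 0 = 0 \<and> (\<forall>N>n. f N = 0) \<and> (\<Sum>N\<le>n. N * f N) = n}"

definition num_partitions :: "nat \<Rightarrow> nat" where
  "num_partitions n = card (partitions n)"

definition decomp :: "nat \<Rightarrow> nat \<Rightarrow> nat \<times> nat" where
  "decomp m N = (THE (j, k). N = j * m ^ k \<and> \<not> m dvd j)"

text \<open>Part-frequency matrix M_j: entry (k,l) is the l-th base-m digit of the
  multiplicity of the part j*m^k.\<close>
definition pf_matrix :: "nat \<Rightarrow> (nat \<Rightarrow> nat) \<Rightarrow> nat \<Rightarrow> nat \<Rightarrow> nat \<Rightarrow> nat" where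
  "pf_matrix m f j k l = (f (j * m ^ k) div m ^ l) mod m"

text \<open>Antidiagonal rotation: the entry at (k,l), l \<ge> 1, moves to (k+1,l-1);
  the entry at (k,0) moves to (0,k). Expressed via the preimage of each position.\<close>
definition rotate_matrix :: "(nat \<Rightarrow> nat \<Rightarrow> nat) \<Rightarrow> nat \<Rightarrow> nat \<Rightarrow> nat" where
  "rotate_matrix M k l = (if k \<ge> 1 then M (k - 1) (l + 1) else M l 0)"

definition digits_value :: "nat \<Rightarrow> (nat \<Rightarrow> nat) \<Rightarrow> nat" where
  "digits_value m d = (\<Sum>l\<in>{l. d l \<noteq> 0}. d l * m ^ l)"

text \<open>The map rho: rotate every matrix M_j and read off the new partition.\<close>
definition rho :: "nat \<Rightarrow> (nat \<Rightarrow> nat) \<Rightarrow> (nat \<Rightarrow> nat)" where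
  "rho m f N = (if N = 0 then 0 else
     (case decomp m N of (j, k) \<Rightarrow> digits_value m (rotate_matrix (pf_matrix m f j) k)))"

definition rho_orbit :: "nat \<Rightarrow> (nat \<Rightarrow> nat) \<Rightarrow> (nat \<Rightarrow> nat) set" where
  "rho_orbit m f = {(rho m ^^ i) f | i. True}"

definition orbit_count :: "nat \<Rightarrow> nat \<Rightarrow> nat \<Rightarrow> nat" where
  "orbit_count m n k = card {X \<in> rho_orbit m ` partitions n. card X = k}"

end

theory Submission
  imports Defs "HOL-Library.Function_Algebras"
begin

text \<open>Split a partition f as g + h, where g N = f N mod m for parts N not divisible by m and
  g N = 0 otherwise; then h is a partition of a multiple of m. The digits collected in g are the
  (0,0) entries of the matrices M_j, which the rotation fixes, and they carry no base-m digit into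
  the other entries, so \<rho>(g + h) = g + \<rho>(h). Hence the \<rho>-orbits on partitions of n are the
  translates g + O of the orbits O on "divisible" partitions h, and
    p(n) = \<Sum>s\<le>n. r(s) d(n - s),   o(n, k) = \<Sum>s\<le>n. r(s) d_k(n - s),
  where r(s) counts the g of weight s and d(t), d_k(t) vanish unless m divides t. As A divides m,
  only s \<equiv> n (mod A) contribute. Since d(0) = 1, induction on s turns C | p(An + B) into
  C | r(s) for all s \<equiv> B (mod A), and the second identity then gives C | o(An + B, k).\<close>

section \<open>The rotation map \<rho>\<close>

lemma nondvd_times_power_exists:
  fixes m N :: nat
  assumes "m \<ge> 2" "N > 0"
  shows "\<exists>j k. N = j * m ^ k \<and> \<not> m dvd j"
  using assms(2)
proof (induction N rule: less_induct)
  case (less N)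
  show ?case
  proof (cases "m dvd N")
    case True
    then obtain N' where N': "N = m * N'" by blast
    with less.prems assms(1) have "0 < N'" "N' < N" by auto
    with less.IH obtain j k where "N' = j * m ^ k" "\<not> m dvd j" by blast
    with N' show ?thesis by (intro exI[of _ j] exI[of _ "Suc k"]) simp
  next
    case False
    then show ?thesis by (intro exI[of _ N] exI[of _ 0]) simp
  qed
qed

lemma nondvd_times_power_unique:
  fixes m j k j' k' :: nat
  assumes "m \<ge> 2" "\<not> m dvd j" "\<not> m dvd j'"
  shows "j * m ^ k = j' * m ^ k' \<Longrightarrow> j = j' \<and> k = k'"
proof (induction k arbitrary: k')
  case 0
  have "k' = 0"
  proof (rule ccontr)
    assume "k' \<noteq> 0"
    then have "m dvd j' * m ^ k'" by simp
    with 0 assms(2) show False by simp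
  qed
  with 0 show ?case by simp
next
  case (Suc k)
  have "k' \<noteq> 0"
  proof
    assume "k' = 0"
    then have "m dvd j * m ^ Suc k" by simp
    with Suc.prems \<open>k' = 0\<close> assms(3) show False by simp
  qed
  then obtain k'' where k': "k' = Suc k''" using not0_implies_Suc by blast
  with Suc.prems assms(1) have "j * m ^ k = j' * m ^ k''" by simp
  from Suc.IH[OF this] k' show ?case by simp
qed

lemma decomp_eqI:
  fixes m j k :: nat
  assumes "m \<ge> 2" "\<not> m dvd j"
  shows "decomp m (j * m ^ k) = (j, k)"
  unfolding decomp_def
proof (rule the_equality)
  fix x assume x: "case x of (j', k') \<Rightarrow> j * m ^ k = j' * m ^ k' \<and> \<not> m dvd j'"
  obtain j' k' where "x = (j', k')" by fastforce
  with x nondvd_times_power_unique[OF assms, where j' = j' and k = k and k' = k'] show "x = (j, k)"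
    by simp
qed (use assms(2) in simp)

lemma digits_value_eq_sum:
  assumes "{l. d l \<noteq> 0} \<subseteq> S" "finite S"
  shows "digits_value m d = (\<Sum>l\<in>S. d l * m ^ l)"
  unfolding digits_value_def using assms by (intro sum.mono_neutral_left) auto

lemma digits_value_mod:
  fixes m :: nat
  assumes "finite {l. d l \<noteq> 0}"
  shows "digits_value m d mod m = d 0 mod m"
proof -
  let ?S = "{l. d l \<noteq> 0} - {0}"
  have "digits_value m d = d 0 + (\<Sum>l\<in>?S. d l * m ^ l)"
    using assms by (subst digits_value_eq_sum[where S = "insert 0 ?S"]) (auto simp: sum.insert_remove)
  moreover have "m dvd (\<Sum>l\<in>?S. d l * m ^ l)"
    by (intro dvd_sum dvd_mult) (simp add: dvd_power)
  ultimately show ?thesis by (elim dvdE) simp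
qed

lemma digits_value_add_lowest_digit:
  fixes m c :: nat
  assumes "finite {l. d l \<noteq> 0}"
  shows "digits_value m (\<lambda>l. (if l = 0 then c else 0) + d l) = c + digits_value m d"
proof -
  let ?S = "insert 0 {l. d l \<noteq> 0}"
  have "digits_value m (\<lambda>l. (if l = 0 then c else 0) + d l)
      = (\<Sum>l\<in>?S. (if l = 0 then c else 0) * m ^ l) + (\<Sum>l\<in>?S. d l * m ^ l)"
    using assms by (subst digits_value_eq_sum[where S = ?S]) (auto simp: sum.distrib algebra_simps)
  also have "\<dots> = c + (\<Sum>l\<in>?S. d l * m ^ l)"
    using assms by (simp only: sum.insert_remove finite_insert) simp
  also have "(\<Sum>l\<in>?S. d l * m ^ l) = digits_value m d"
    by (rule digits_value_eq_sum[symmetric]) (use assms in auto)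
  finally show ?thesis .
qed

lemma rho_times_power:
  fixes m j k :: nat
  assumes "m \<ge> 2" "\<not> m dvd j"
  shows "rho m f (j * m ^ k) = digits_value m (rotate_matrix (pf_matrix m f j) k)"
proof -
  from assms have "j > 0" "m > 0" by (auto intro: gr0I)
  with decomp_eqI[OF assms] show ?thesis by (simp add: rho_def)
qed

lemma finite_support_boundE:
  fixes f :: "nat \<Rightarrow> 'a::zero"
  assumes "finite {N. f N \<noteq> 0}"
  obtains b where "\<And>N. N > b \<Longrightarrow> f N = 0"
proof -
  from assms obtain b where "\<forall>N\<in>{N. f N \<noteq> 0}. N \<le> b"
    by (auto simp: finite_nat_set_iff_bounded_le)
  then have "\<And>N. N > b \<Longrightarrow> f N = 0" by force
  then show ?thesis by (rule that)
qed

lemma finite_support_rotate_pf_matrix: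
  fixes m j k :: nat
  assumes "m \<ge> 2" "finite {N. f N \<noteq> 0}" "j > 0"
  shows "finite {l. rotate_matrix (pf_matrix m f j) k l \<noteq> 0}"
proof -
  obtain b where b: "\<And>N. N > b \<Longrightarrow> f N = 0"
    using finite_support_boundE[OF assms(2)] by blast
  let ?x = "f (j * m ^ (k - 1))"
  have "rotate_matrix (pf_matrix m f j) k l = 0" if l: "l > ?x + b" for l
  proof (cases "k = 0")
    case True
    have "b < l" using l by simp
    also have "l < m ^ l" by (rule power_gt_expt) (use assms(1) in simp)
    also have "\<dots> \<le> j * m ^ l" using assms(3) by simp
    finally have "f (j * m ^ l) = 0" by (rule b)
    with True show ?thesis by (simp add: rotate_matrix_def pf_matrix_def)
  next
    case False
    have "?x < Suc l" using l by simp
    also have "\<dots> < m ^ Suc l" by (rule power_gt_expt) (use assms(1) in simp)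
    finally have "?x div m ^ Suc l = 0" by (rule div_less)
    with False show ?thesis by (simp add: rotate_matrix_def pf_matrix_def)
  qed
  then have "{l. rotate_matrix (pf_matrix m f j) k l \<noteq> 0} \<subseteq> {..?x + b}"
    by (auto simp: not_less[symmetric])
  then show ?thesis by (rule finite_subset) simp
qed

lemma finite_support_rho:
  fixes m :: nat
  assumes "m \<ge> 2" "finite {N. f N \<noteq> 0}"
  shows "finite {N. rho m f N \<noteq> 0}"
proof -
  obtain b where b: "\<And>N. N > b \<Longrightarrow> f N = 0"
    using finite_support_boundE[OF assms(2)] by blast
  have "N \<le> m * b" if N: "rho m f N \<noteq> 0" for N
  proof -
    have "rho m f 0 = 0" by (simp add: rho_def)
    with N have "N > 0" by (metis gr0I)
    then obtain j k where jk: "N = j * m ^ k" "\<not> m dvd j"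
      using nondvd_times_power_exists[OF assms(1)] by blast
    from N obtain l where l: "rotate_matrix (pf_matrix m f j) k l \<noteq> 0"
      unfolding jk(1) rho_times_power[OF assms(1) jk(2)] digits_value_def
      by (metis (mono_tags, lifting) empty_Collect_eq sum.empty)
    show ?thesis
    proof (cases "k = 0")
      case True
      with l have "f (j * m ^ l) mod m \<noteq> 0" by (simp add: rotate_matrix_def pf_matrix_def)
      then have "j * m ^ l \<le> b" by (metis b leI mod_0)
      moreover have "j \<le> j * m ^ l" "b \<le> m * b" using assms(1) by simp_all
      moreover have "N = j" using True jk(1) by simp
      ultimately show ?thesis by linarith
    next
      case False
      then obtain k' where k': "k = Suc k'" using not0_implies_Suc by blast
      with l have "f (j * m ^ k') div m ^ Suc l mod m \<noteq> 0" by (simp add: rotate_matrix_def pf_matrix_def)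
      then have "j * m ^ k' \<le> b" by (metis b leI div_0 mod_0)
      then have "m * (j * m ^ k') \<le> m * b" by (rule mult_le_mono2)
      then show ?thesis using jk(1) k' by (simp add: ac_simps)
    qed
  qed
  then have "{N. rho m f N \<noteq> 0} \<subseteq> {..m * b}" by auto
  then show ?thesis by (rule finite_subset) simp
qed

lemma rho_mod_eq:
  fixes m N :: nat
  assumes "m \<ge> 2" "finite {N. f N \<noteq> 0}" "\<not> m dvd N"
  shows "rho m f N mod m = f N mod m"
proof -
  have "N > 0" using assms(3) by (metis dvd_0_right gr0I)
  have "rho m f N = digits_value m (rotate_matrix (pf_matrix m f N) 0)"
    using rho_times_power[OF assms(1,3), of f 0] by simp
  also have "\<dots> mod m = rotate_matrix (pf_matrix m f N) 0 0 mod m"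
    by (rule digits_value_mod[OF finite_support_rotate_pf_matrix[OF assms(1,2) \<open>N > 0\<close>]])
  finally show ?thesis by (simp add: rotate_matrix_def pf_matrix_def)
qed

text \<open>The digits that \<rho> never moves: the units digits of the multiplicities of the parts
  not divisible by m, i.e. the (0,0) entries of all matrices M_j.\<close>

definition residue_part :: "nat \<Rightarrow> (nat \<Rightarrow> nat) \<Rightarrow> nat \<Rightarrow> nat" where
  "residue_part m f N = (if m dvd N then 0 else f N mod m)"

lemma residue_part_add:
  assumes "residue_part m g = g" "residue_part m h = 0"
  shows "residue_part m (g + h) = g"
proof
  fix N
  have g: "g N = residue_part m g N" and h: "residue_part m h N = 0" using assms by simp_all
  show "residue_part m (g + h) N = g N"
  proof (cases "m dvd N")
    case True
    with g show ?thesis by (simp add: residue_part_def)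
  next
    case False
    with g h have "g N = g N mod m" "h N mod m = 0" by (simp_all add: residue_part_def)
    then have "(g N + h N) mod m = g N" by (metis add.right_neutral mod_add_eq mod_mod_trivial)
    with False show ?thesis by (simp add: residue_part_def)
  qed
qed

lemma residue_part_idem: "residue_part m (residue_part m f) = residue_part m f"
  by (auto simp: residue_part_def fun_eq_iff)

lemma residue_part_diff: "residue_part m (f - residue_part m f) = 0"
  by (auto simp: residue_part_def fun_eq_iff minus_mod_eq_mult_div)

lemma residue_part_le: "residue_part m f N \<le> f N"
  by (simp add: residue_part_def)

lemma residue_part_rho:
  fixes m :: nat
  assumes "m \<ge> 2" "finite {N. f N \<noteq> 0}"
  shows "residue_part m (rho m f) = residue_part m f"
  using rho_mod_eq[OF assms] by (auto simp: residue_part_def)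

lemma add_div_power_mod:
  fixes a b m l :: nat
  assumes "a < m" "m dvd b"
  shows "(a + b) div m ^ l mod m = (if l = 0 then a else 0) + b div m ^ l mod m"
proof -
  from assms(2) obtain c where c: "b = m * c" by blast
  with assms(1) have div: "(a + b) div m = c" by simp
  show ?thesis
  proof (cases l)
    case 0
    with assms c show ?thesis by simp
  next
    case (Suc l')
    have "(a + b) div m ^ l = c div m ^ l'" using Suc div by (simp add: div_mult2_eq)
    moreover have "b div m ^ l = c div m ^ l'" using Suc c assms(1) by (simp add: div_mult2_eq)
    ultimately show ?thesis using Suc by simp
  qed
qed

lemma pf_matrix_add:
  fixes m :: nat
  assumes "m > 0" "residue_part m g = g" "residue_part m h = 0"
  shows "pf_matrix m (g + h) j k l = (if l = 0 then g (j * m ^ k) else 0) + pf_matrix m h j k l"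
proof -
  let ?M = "j * m ^ k"
  have g: "g ?M = (if m dvd ?M then 0 else g ?M mod m)"
    using fun_cong[OF assms(2), of ?M] by (simp add: residue_part_def)
  show ?thesis
  proof (cases "m dvd ?M")
    case True
    with g show ?thesis by (simp add: pf_matrix_def)
  next
    case False
    with g assms(1) have "g ?M < m" by (metis mod_less_divisor)
    moreover from False have "m dvd h ?M"
      using fun_cong[OF assms(3), of ?M] by (simp add: residue_part_def mod_eq_0_iff_dvd)
    ultimately show ?thesis by (simp add: pf_matrix_def add_div_power_mod)
  qed
qed

lemma rotate_pf_matrix_add:
  fixes m :: nat
  assumes "m > 0" "residue_part m g = g" "residue_part m h = 0"
  shows "rotate_matrix (pf_matrix m (g + h) j) k
    = (\<lambda>l. (if k = 0 \<and> l = 0 then g j else 0) + rotate_matrix (pf_matrix m h j) k l)"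
proof
  fix l
  have "g (j * m ^ l) = 0" if "l > 0"
    using that fun_cong[OF assms(2), of "j * m ^ l"] by (simp add: residue_part_def)
  then show "rotate_matrix (pf_matrix m (g + h) j) k l
    = (if k = 0 \<and> l = 0 then g j else 0) + rotate_matrix (pf_matrix m h j) k l"
    by (auto simp: rotate_matrix_def pf_matrix_add[OF assms])
qed

lemma rho_add:
  fixes m :: nat
  assumes "m \<ge> 2" "residue_part m g = g" "residue_part m h = 0" "finite {N. h N \<noteq> 0}"
  shows "rho m (g + h) = g + rho m h"
proof
  fix N
  show "rho m (g + h) N = (g + rho m h) N"
  proof (cases "N = 0")
    case True
    then show ?thesis using fun_cong[OF assms(2), of 0] by (simp add: rho_def residue_part_def)
  next
    case False
    then obtain j k where jk: "N = j * m ^ k" "\<not> m dvd j"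
      using nondvd_times_power_exists[OF assms(1)] by blast
    then have "j > 0" by (metis dvd_0_right gr0I)
    have g: "(if k = 0 then g j else 0) = g N"
      using jk fun_cong[OF assms(2), of N] by (auto simp: residue_part_def)
    have "rho m (g + h) N = digits_value m (rotate_matrix (pf_matrix m (g + h) j) k)"
      unfolding jk(1) by (rule rho_times_power[OF assms(1) jk(2)])
    also have "\<dots> = (if k = 0 then g j else 0) + digits_value m (rotate_matrix (pf_matrix m h j) k)"
      using assms(1-3) finite_support_rotate_pf_matrix[OF assms(1,4) \<open>j > 0\<close>]
      by (simp add: rotate_pf_matrix_add digits_value_add_lowest_digit)
    also have "\<dots> = (g + rho m h) N"
      using g jk(1) rho_times_power[OF assms(1) jk(2), of h k] by simp
    finally show ?thesis .
  qed
qed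

lemma rho_funpow_invariants:
  fixes m :: nat
  assumes "m \<ge> 2" "finite {N. f N \<noteq> 0}"
  shows "finite {N. (rho m ^^ i) f N \<noteq> 0} \<and> residue_part m ((rho m ^^ i) f) = residue_part m f"
proof (induction i)
  case (Suc i)
  then show ?case using finite_support_rho[OF assms(1)] residue_part_rho[OF assms(1)] by simp
qed (use assms(2) in simp)

lemma rho_funpow_add:
  fixes m :: nat
  assumes "m \<ge> 2" "residue_part m g = g" "residue_part m h = 0" "finite {N. h N \<noteq> 0}"
  shows "(rho m ^^ i) (g + h) = g + (rho m ^^ i) h"
proof (induction i)
  case (Suc i)
  have "residue_part m ((rho m ^^ i) h) = 0" "finite {N. (rho m ^^ i) h N \<noteq> 0}"
    using rho_funpow_invariants[OF assms(1,4)] assms(3) by simp_all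
  from rho_add[OF assms(1,2) this] Suc.IH show ?case by (simp only: funpow.simps o_apply)
qed simp

lemma rho_orbit_add:
  fixes m :: nat
  assumes "m \<ge> 2" "residue_part m g = g" "residue_part m h = 0" "finite {N. h N \<noteq> 0}"
  shows "rho_orbit m (g + h) = (+) g ` rho_orbit m h"
  unfolding rho_orbit_def rho_funpow_add[OF assms] by blast

lemma residue_part_rho_orbit:
  fixes m :: nat
  assumes "m \<ge> 2" "finite {N. f N \<noteq> 0}" "x \<in> rho_orbit m f"
  shows "residue_part m x = residue_part m f"
  using assms(3) rho_funpow_invariants[OF assms(1,2)] by (auto simp: rho_orbit_def)

lemma self_in_rho_orbit: "f \<in> rho_orbit m f"
  unfolding rho_orbit_def by (metis (mono_tags) funpow_0 mem_Collect_eq)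

section \<open>Partitions as multiplicity functions\<close>

lemma partitions_vanish: "f \<in> partitions n \<Longrightarrow> n < N \<Longrightarrow> f N = 0"
  by (simp add: partitions_def)

lemma finite_support_partitions:
  assumes "f \<in> partitions n"
  shows "finite {N. f N \<noteq> 0}"
proof -
  have "N \<le> n" if "f N \<noteq> 0" for N
    using partitions_vanish[OF assms, of N] that by (meson leI)
  then have "{N. f N \<noteq> 0} \<subseteq> {..n}" by blast
  then show ?thesis by (rule finite_subset) simp
qed

lemma mem_partitions_iff:
  fixes n b :: nat
  assumes "n \<le> b" "\<And>N. b < N \<Longrightarrow> f N = 0"
  shows "f \<in> partitions n \<longleftrightarrow> f 0 = 0 \<and> (\<Sum>N\<le>b. N * f N) = n"
proof -
  have split: "(\<Sum>N\<le>b. N * f N) = (\<Sum>N\<le>n. N * f N) + (\<Sum>N\<in>{n<..b}. N * f N)"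
    unfolding ivl_disj_un_one(3)[OF assms(1), symmetric] by (rule sum.union_disjoint) auto
  show ?thesis
  proof
    assume f: "f \<in> partitions n"
    then have "(\<Sum>N\<in>{n<..b}. N * f N) = 0"
      using partitions_vanish by (intro sum.neutral) auto
    with f split show "f 0 = 0 \<and> (\<Sum>N\<le>b. N * f N) = n"
      unfolding partitions_def by simp
  next
    assume f: "f 0 = 0 \<and> (\<Sum>N\<le>b. N * f N) = n"
    have vanish: "f N = 0" if "n < N" for N
    proof (cases "N \<le> b")
      case True
      then have "N * f N \<le> n" using f by (metis finite_atMost atMost_iff member_le_sum zero_le)
      show ?thesis
      proof (rule ccontr)
        assume "f N \<noteq> 0"
        then have "N \<le> N * f N" by simp
        with \<open>N * f N \<le> n\<close> that show False by linarith
      qed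
    next
      case False
      then show ?thesis using assms(2) by simp
    qed
    then have "(\<Sum>N\<in>{n<..b}. N * f N) = 0" by (intro sum.neutral) auto
    with f split have "(\<Sum>N\<le>n. N * f N) = n" by simp
    with f vanish show "f \<in> partitions n" unfolding partitions_def by blast
  qed
qed

lemma partitions_weight_unique:
  assumes "f \<in> partitions s" "f \<in> partitions t"
  shows "s = t"
proof -
  have "\<And>N. max s t < N \<Longrightarrow> f N = 0" using partitions_vanish[OF assms(1)] by simp
  then show ?thesis
    using assms mem_partitions_iff[of s "max s t" f] mem_partitions_iff[of t "max s t" f] by simp
qed

lemma partitions_0: "partitions 0 = {0}"
  by (auto simp: partitions_def fun_eq_iff) (metis gr0I)

lemma partitions_le:
  assumes "f \<in> partitions n"
  shows "f N \<le> n"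
proof (cases "N = 0 \<or> n < N")
  case True
  with assms show ?thesis by (auto simp: partitions_def)
next
  case False
  then have "f N \<le> N * f N" by simp
  also have "\<dots> \<le> (\<Sum>N\<le>n. N * f N)" using False by (intro member_le_sum) auto
  finally show ?thesis using assms by (simp add: partitions_def)
qed

lemma finite_partitions: "finite (partitions n)"
proof (rule finite_subset)
  show "partitions n \<subseteq> {f. \<forall>N. (N \<in> {..n} \<longrightarrow> f N \<in> {..n}) \<and> (N \<notin> {..n} \<longrightarrow> f N = 0)}"
  proof
    fix f assume f: "f \<in> partitions n"
    show "f \<in> {f. \<forall>N. (N \<in> {..n} \<longrightarrow> f N \<in> {..n}) \<and> (N \<notin> {..n} \<longrightarrow> f N = 0)}"
      using partitions_le[OF f] partitions_vanish[OF f] by (simp add: not_le)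
  qed
  show "finite {f. \<forall>N. (N \<in> {..n} \<longrightarrow> f N \<in> {..n}) \<and> (N \<notin> {..n} \<longrightarrow> f N = (0::nat))}"
    by (rule finite_set_of_finite_funs) simp_all
qed

lemma add_partitions:
  assumes "g \<in> partitions s" "h \<in> partitions t"
  shows "g + h \<in> partitions (s + t)"
proof -
  let ?b = "s + t"
  have "\<And>N. ?b < N \<Longrightarrow> g N = 0" "\<And>N. ?b < N \<Longrightarrow> h N = 0"
    using partitions_vanish[OF assms(1)] partitions_vanish[OF assms(2)] by simp_all
  with assms show ?thesis
    using mem_partitions_iff[of s ?b g] mem_partitions_iff[of t ?b h] mem_partitions_iff[of ?b ?b "g + h"]
    by (simp add: distrib_left sum.distrib)
qed

lemma diff_partitions:
  assumes "f \<in> partitions n" "\<And>N. g N \<le> f N"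
  obtains s where "s \<le> n" "g \<in> partitions s" "f - g \<in> partitions (n - s)"
proof -
  have f0: "f 0 = 0" and f_weight: "(\<Sum>N\<le>n. N * f N) = n"
    using assms(1) by (simp_all add: partitions_def)
  have vanish: "f N = 0" "g N = 0" "(f - g) N = 0" if "n < N" for N
    using partitions_vanish[OF assms(1) that] assms(2)[of N] by simp_all
  have g0: "g 0 = 0" using assms(2)[of 0] f0 by simp
  define s where "s = (\<Sum>N\<le>n. N * g N)"
  have "s \<le> (\<Sum>N\<le>n. N * f N)" unfolding s_def by (intro sum_mono) (simp add: assms(2))
  then have "s \<le> n" by (simp only: f_weight)
  moreover have "g \<in> partitions s"
    using mem_partitions_iff[OF \<open>s \<le> n\<close>, of g] vanish(2) g0 s_def by blast
  moreover have "(\<Sum>N\<le>n. N * (f - g) N) = (\<Sum>N\<le>n. N * f N) - s"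
    unfolding s_def minus_apply diff_mult_distrib2
    by (rule sum_subtractf_nat) (simp add: assms(2))
  then have "(\<Sum>N\<le>n. N * (f - g) N) = n - s" by (simp only: f_weight)
  then have "f - g \<in> partitions (n - s)"
    using mem_partitions_iff[of "n - s" n "f - g"] vanish(3) f0 by simp
  ultimately show ?thesis by (rule that)
qed

section \<open>Splitting off the residue part\<close>

definition reduced_partitions :: "nat \<Rightarrow> nat \<Rightarrow> (nat \<Rightarrow> nat) set" where
  "reduced_partitions m s = {g \<in> partitions s. residue_part m g = g}"

definition divisible_partitions :: "nat \<Rightarrow> nat \<Rightarrow> (nat \<Rightarrow> nat) set" where
  "divisible_partitions m t = {h \<in> partitions t. residue_part m h = 0}"

lemma bij_betw_residue_decomposition:
  "bij_betw (\<lambda>(g, h). g + h)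
     (\<Union>s\<le>n. reduced_partitions m s \<times> divisible_partitions m (n - s)) (partitions n)"
proof (rule bij_betw_imageI)
  show "inj_on (\<lambda>(g, h). g + h) (\<Union>s\<le>n. reduced_partitions m s \<times> divisible_partitions m (n - s))"
  proof (rule inj_onI, clarify)
    fix g h g' h' s s'
    assume "g \<in> reduced_partitions m s" "h \<in> divisible_partitions m (n - s)"
      "g' \<in> reduced_partitions m s'" "h' \<in> divisible_partitions m (n - s')" and eq: "g + h = g' + h'"
    then have "residue_part m (g + h) = g" "residue_part m (g' + h') = g'"
      unfolding reduced_partitions_def divisible_partitions_def by (blast intro: residue_part_add)+
    with eq have "g = g'" by simp
    with eq show "g = g' \<and> h = h'" by simp
  qed
  show "(\<lambda>(g, h). g + h) ` (\<Union>s\<le>n. reduced_partitions m s \<times> divisible_partitions m (n - s))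
      = partitions n"
  proof (intro equalityI subsetI)
    fix f assume "f \<in> (\<lambda>(g, h). g + h) ` (\<Union>s\<le>n. reduced_partitions m s \<times> divisible_partitions m (n - s))"
    then obtain s g h where "s \<le> n" "g \<in> partitions s" "h \<in> partitions (n - s)" "f = g + h"
      by (auto simp: reduced_partitions_def divisible_partitions_def)
    with add_partitions[of g s h "n - s"] show "f \<in> partitions n" by simp
  next
    fix f assume f: "f \<in> partitions n"
    let ?g = "residue_part m f"
    obtain s where s: "s \<le> n" "?g \<in> partitions s" "f - ?g \<in> partitions (n - s)"
      using diff_partitions[OF f, of ?g] residue_part_le by blast
    then have "(?g, f - ?g) \<in> reduced_partitions m s \<times> divisible_partitions m (n - s)"
      by (simp add: reduced_partitions_def divisible_partitions_def residue_part_idem residue_part_diff)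
    moreover have "f = ?g + (f - ?g)"
      by (simp add: fun_eq_iff residue_part_le)
    ultimately show "f \<in> (\<lambda>(g, h). g + h) ` (\<Union>s\<le>n. reduced_partitions m s \<times> divisible_partitions m (n - s))"
      using s(1) by (intro image_eqI[of _ _ "(?g, f - ?g)"]) auto
  qed
qed

lemma card_UN_Times:
  assumes "finite I" "\<And>i. i \<in> I \<Longrightarrow> finite (R i)" "\<And>i. i \<in> I \<Longrightarrow> finite (W i)"
    and "\<And>i j. i \<in> I \<Longrightarrow> j \<in> I \<Longrightarrow> i \<noteq> j \<Longrightarrow> R i \<inter> R j = {}"
  shows "card (\<Union>i\<in>I. R i \<times> W i) = (\<Sum>i\<in>I. card (R i) * card (W i))"
proof -
  have "card (\<Union>i\<in>I. R i \<times> W i) = (\<Sum>i\<in>I. card (R i \<times> W i))"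
    by (rule card_UN_disjoint) (use assms in \<open>auto simp: disjoint_iff\<close>)
  then show ?thesis by (simp add: card_cartesian_product)
qed

lemma finite_reduced_partitions: "finite (reduced_partitions m s)"
  unfolding reduced_partitions_def using finite_partitions by simp

lemma finite_divisible_partitions: "finite (divisible_partitions m t)"
  unfolding divisible_partitions_def using finite_partitions by simp

lemma reduced_partitions_disjoint:
  "s \<noteq> t \<Longrightarrow> reduced_partitions m s \<inter> reduced_partitions m t = {}"
  unfolding reduced_partitions_def using partitions_weight_unique by blast

lemma num_partitions_convolution:
  "num_partitions n = (\<Sum>s\<le>n. card (reduced_partitions m s) * card (divisible_partitions m (n - s)))"
proof -
  have "num_partitions n = card (\<Union>s\<le>n. reduced_partitions m s \<times> divisible_partitions m (n - s))"
    unfolding num_partitions_def by (rule bij_betw_same_card[OF bij_betw_residue_decomposition, symmetric])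
  also have "\<dots> = (\<Sum>s\<le>n. card (reduced_partitions m s) * card (divisible_partitions m (n - s)))"
    by (rule card_UN_Times)
      (simp_all add: finite_reduced_partitions finite_divisible_partitions reduced_partitions_disjoint)
  finally show ?thesis .
qed

lemma rho_orbit_image_partitions:
  fixes m :: nat
  assumes "m \<ge> 2"
  shows "rho_orbit m ` partitions n = (\<lambda>(g, Y). (+) g ` Y) `
    (\<Union>s\<le>n. reduced_partitions m s \<times> rho_orbit m ` divisible_partitions m (n - s))"
proof -
  let ?P = "\<Union>s\<le>n. reduced_partitions m s \<times> divisible_partitions m (n - s)"
  have orbit: "rho_orbit m (g + h) = (+) g ` rho_orbit m h" if "(g, h) \<in> ?P" for g h
    using that rho_orbit_add[OF assms] finite_support_partitions
    by (auto simp: reduced_partitions_def divisible_partitions_def)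
  have "partitions n = (\<lambda>(g, h). g + h) ` ?P"
    using bij_betw_imp_surj_on[OF bij_betw_residue_decomposition] by simp
  then have "rho_orbit m ` partitions n = (\<lambda>(g, h). rho_orbit m (g + h)) ` ?P"
    by (simp add: image_image case_prod_beta')
  also have "\<dots> = (\<lambda>(g, h). (+) g ` rho_orbit m h) ` ?P"
    using orbit by (intro image_cong) auto
  also have "\<dots> = (\<lambda>(g, Y). (+) g ` Y) `
      (\<Union>s\<le>n. reduced_partitions m s \<times> rho_orbit m ` divisible_partitions m (n - s))"
    by (auto simp: image_iff)
  finally show ?thesis .
qed

lemma inj_on_translate_sets:
  "inj_on (\<lambda>(g, Y). (+) g ` Y)
    {(g, Y). residue_part m g = g \<and> Y \<noteq> {} \<and> (\<forall>y\<in>Y. residue_part m y = 0)}"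
proof (rule inj_onI, clarify)
  fix g Y g' Y'
  assume g: "residue_part m g = g" "residue_part m g' = g'"
    and Y: "Y \<noteq> {}" "\<forall>y\<in>Y. residue_part m y = 0" "\<forall>y\<in>Y'. residue_part m y = 0"
    and eq: "(+) g ` Y = (+) g' ` Y'"
  from Y(1) obtain y where "y \<in> Y" by blast
  with eq obtain y' where "y' \<in> Y'" "g + y = g' + y'" by blast
  with g Y \<open>y \<in> Y\<close> residue_part_add[of m g y] residue_part_add[of m g' y'] have "g = g'" by metis
  moreover have "inj ((+) g)" by (rule injI) simp
  ultimately show "g = g' \<and> Y = Y'" using eq by (simp add: inj_image_eq_iff)
qed

lemma orbit_count_convolution:
  fixes m :: nat
  assumes "m \<ge> 2"
  shows "orbit_count m n k = (\<Sum>s\<le>n. card (reduced_partitions m s) *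
    card {Y \<in> rho_orbit m ` divisible_partitions m (n - s). card Y = k})"
proof -
  let ?T = "\<lambda>(g, Y). (+) g ` Y"
  let ?O = "\<lambda>s. {Y \<in> rho_orbit m ` divisible_partitions m (n - s). card Y = k}"
  let ?S = "\<Union>s\<le>n. reduced_partitions m s \<times> ?O s"
  let ?P = "\<Union>s\<le>n. reduced_partitions m s \<times> rho_orbit m ` divisible_partitions m (n - s)"
  have card_translate: "card ((+) g ` Y) = card Y" for g :: "nat \<Rightarrow> nat" and Y
    by (rule card_image) (simp add: inj_on_def)
  have "{p \<in> ?P. card (?T p) = k} = ?S"
    using card_translate by auto
  then have "{X \<in> rho_orbit m ` partitions n. card X = k} = ?T ` ?S"
    unfolding rho_orbit_image_partitions[OF assms] Compr_image_eq by (rule arg_cong)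
  moreover have "inj_on ?T ?S"
  proof (rule inj_on_subset[OF inj_on_translate_sets], clarify)
    fix s g h assume "g \<in> reduced_partitions m s" "h \<in> divisible_partitions m (n - s)"
    then have g: "residue_part m g = g" and h: "h \<in> partitions (n - s)" "residue_part m h = 0"
      by (simp_all add: reduced_partitions_def divisible_partitions_def)
    have "rho_orbit m h \<noteq> {}" using self_in_rho_orbit by fast
    moreover have "\<forall>y\<in>rho_orbit m h. residue_part m y = 0"
      using residue_part_rho_orbit[OF assms finite_support_partitions[OF h(1)]] h(2) by simp
    ultimately show "residue_part m g = g \<and> rho_orbit m h \<noteq> {} \<and>
        (\<forall>y\<in>rho_orbit m h. residue_part m y = 0)"
      using g by blast
  qed
  ultimately have "orbit_count m n k = card ?S"
    unfolding orbit_count_def by (simp add: card_image)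
  also have "\<dots> = (\<Sum>s\<le>n. card (reduced_partitions m s) * card (?O s))"
    by (rule card_UN_Times) (simp_all add: finite_reduced_partitions finite_divisible_partitions
        reduced_partitions_disjoint)
  finally show ?thesis .
qed

lemma dvd_of_divisible_partitions:
  assumes "h \<in> divisible_partitions m t"
  shows "m dvd t"
proof -
  have h: "h \<in> partitions t" "residue_part m h = 0"
    using assms by (simp_all add: divisible_partitions_def)
  have "m dvd N * h N" for N
  proof (cases "m dvd N")
    case False
    then have "h N mod m = 0" using fun_cong[OF h(2), of N] by (simp add: residue_part_def)
    then show ?thesis by auto
  qed simp
  then have "m dvd (\<Sum>N\<le>t. N * h N)" by (simp add: dvd_sum)
  with h(1) show ?thesis by (simp add: partitions_def)
qed

lemma divisible_partitions_eq_empty: "\<not> m dvd t \<Longrightarrow> divisible_partitions m t = {}"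
  using dvd_of_divisible_partitions by blast

lemma divisible_partitions_0: "divisible_partitions m 0 = {0}"
  by (auto simp: divisible_partitions_def partitions_0 residue_part_def fun_eq_iff)

lemma dvd_convolution_sum:
  fixes m A C N :: nat and a b :: "nat \<Rightarrow> nat"
  assumes "A dvd m" "\<And>s. s \<in> S \<Longrightarrow> s \<le> N"
    and "\<And>s. s \<in> S \<Longrightarrow> s mod A = N mod A \<Longrightarrow> C dvd a s"
    and "\<And>t. \<not> m dvd t \<Longrightarrow> b t = 0"
  shows "C dvd (\<Sum>s\<in>S. a s * b (N - s))"
proof (rule dvd_sum)
  fix s assume s: "s \<in> S"
  show "C dvd a s * b (N - s)"
  proof (cases "m dvd N - s")
    case True
    with assms(1) have "A dvd N - s" by (rule dvd_trans)
    then have "N mod A = s mod A" using mod_eq_dvd_iff_nat[OF assms(2)[OF s]] by blast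
    then show ?thesis using assms(3)[OF s] by simp
  qed (simp add: assms(4))
qed

lemma dvd_card_reduced_partitions:
  fixes m A B C N :: nat
  assumes "A dvd m" "\<forall>n. C dvd num_partitions (A * n + B)"
  shows "N mod A = B \<Longrightarrow> C dvd card (reduced_partitions m N)"
proof (induction N rule: less_induct)
  case (less N)
  let ?rest = "\<Sum>s<N. card (reduced_partitions m s) * card (divisible_partitions m (N - s))"
  have "A * (N div A) + B = N" using less.prems by (metis div_mult_mod_eq mult.commute)
  then have "C dvd num_partitions N" using assms(2) by metis
  moreover have "num_partitions N = card (reduced_partitions m N) + ?rest"
    by (simp add: num_partitions_convolution[of N m] divisible_partitions_0 lessThan_Suc_atMost[symmetric])
  moreover have "C dvd ?rest"
    using assms(1) less.IH less.prems divisible_partitions_eq_empty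
    by (intro dvd_convolution_sum[where m = m and A = A]) auto
  ultimately show ?case by (simp add: dvd_add_left_iff)
qed

theorem theorem2:
  fixes m A B C :: nat
  assumes "m \<ge> 2" and "A \<ge> 1" and "C \<ge> 1"
    and "\<forall>n. C dvd num_partitions (A * n + B)"
    and "B < A" and "A dvd m"
  shows "\<forall>k n. k > 0 \<longrightarrow> C dvd orbit_count m (A * n + B) k"
proof (intro allI impI)
  fix k n :: nat
  let ?N = "A * n + B"
  have "?N mod A = B" using assms(5) by simp
  then have "C dvd (\<Sum>s\<le>?N. card (reduced_partitions m s) *
      card {Y \<in> rho_orbit m ` divisible_partitions m (?N - s). card Y = k})"
    using dvd_card_reduced_partitions[OF assms(6,4)] divisible_partitions_eq_empty
    by (intro dvd_convolution_sum[where m = m and A = A, OF assms(6)]) auto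
  then show "C dvd orbit_count m ?N k" by (simp add: orbit_count_convolution[OF assms(1)])
qed

end
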